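(* Let $a_n$ denote the size of the smallest string attractor of the length-$n$ prefix $\mathbf{t}[0..n-1]$ of the Thue–Morse word $\mathbf{t}$. Then $$a_n=\begin{cases}1,& n=1;\\ 2,& 2\le n\le 6;\\ 3,& 7\le n\le 14 \text{ or } 17\le n\le 24;\\ 4,& n\in\{15,16\}\text{ or } n\ge 25.\end{cases}$$
   Context: The Thue–Morse word $\mathbf{t}=0110100110010110\cdots$ is the infinite fixed point, starting with $0$, of the morphism $\mu$ with $0\mapsto 01$, $1\mapsto 10$; it is indexed starting at $0$. A string attractor of a finite word $w=w[0..n-1]$ is a set $S\subseteq\{0,\ldots,n-1\}$ such that every nonempty factor $f$ of $w$ has an occurrence $w[p..q]=f$ with $p\le i\le q$ for some $i\in S$. *)

theory Defs
  imports Main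
begin

fun tm_letter :: "nat \<Rightarrow> nat list" where
  "tm_letter a = (if a = 0 then [0, 1] else [1, 0])"

definition tm_mu :: "nat list \<Rightarrow> nat list" where
  "tm_mu w = concat (map tm_letter w)"

text \<open>The Thue--Morse word, indexed from 0: the n-th letter of the fixed point of mu
  starting with 0, read off the prefix mu^(n+1)(0), which has length 2^(n+1) > n.\<close>
definition thue_morse :: "nat \<Rightarrow> nat" where
  "thue_morse n = ((tm_mu ^^ Suc n) [0]) ! n"

definition tm_prefix :: "nat \<Rightarrow> nat list" where
  "tm_prefix n = map thue_morse [0..<n]"

definition factor :: "'a list \<Rightarrow> nat \<Rightarrow> nat \<Rightarrow> 'a list" where
  "factor w p q = take (Suc q - p) (drop p w)"

definition string_attractor :: "'a list \<Rightarrow> nat set \<Rightarrow> bool" where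
  "string_attractor w S \<longleftrightarrow> S \<subseteq> {0..<length w} \<and>
     (\<forall>p q. p \<le> q \<and> q < length w \<longrightarrow>
        (\<exists>p' q' i. p' \<le> q' \<and> q' < length w \<and> factor w p' q' = factor w p q \<and>
                   i \<in> S \<and> p' \<le> i \<and> i \<le> q'))"

definition min_attractor_size :: "'a list \<Rightarrow> nat" where
  "min_attractor_size w = (LEAST k. \<exists>S. string_attractor w S \<and> card S = k)"

end

theory Submission
  imports Defs
begin

(* Lower bounds: a set S meeting an occurrence of every factor of length at least 2 of
   t[0..n-1] halves, i |-> i div 2, to such a set for t[0..n div 2 - 1], because t contains
   neither aaa nor an alternating factor of length 5, so all occurrences of a factor of length at
   least 4 start at positions of one parity.  Hence sets of size 3 need only be excluded for
   25 <= n < 50, and this and all cases n <= 24 are settled by finite certificates: lists of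
   factors whose sets of covered positions have no small hitting set.

   Upper bounds: for n >= 25 we use four-element sets S such that every factor of length at
   least 2 has an occurrence containing two consecutive positions i, i + 1 with i in S.  Such
   a set for the prefixes of lengths k and k + 1 yields the set 2S + 1 for the prefixes of
   lengths 2k and 2k + 1, since each such factor lies inside the image under mu of a shorter
   factor (or is the image of a letter), so three explicit sets for 12 <= n <= 24 suffice. *)

section \<open>The Thue--Morse word by recursion\<close>

fun tm :: "nat \<Rightarrow> nat" where
  "tm n = (if n = 0 then 0 else if even n then tm (n div 2) else 1 - tm (n div 2))"

declare tm.simps [simp del]

lemma tm_0 [simp]: "tm 0 = 0"
  by (simp add: tm.simps)

lemma tm_double [simp]: "tm (2 * n) = tm n"
  by (subst tm.simps) auto

lemma tm_double_Suc [simp]: "tm (Suc (2 * n)) = 1 - tm n"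
  by (subst tm.simps) auto

lemma tm_le_1: "tm n \<le> 1"
  by (induction n rule: tm.induct) (subst tm.simps, auto)

lemma tm_double_plus: "r < 2 \<Longrightarrow> tm (2 * n + r) = (if r = 0 then tm n else 1 - tm n)"
  by (cases r) auto

lemma tm_mu_map_tm: "tm_mu (map tm [0..<m]) = map tm [0..<2 * m]"
proof (induction m)
  case 0
  then show ?case by (simp add: tm_mu_def)
next
  case (Suc m)
  have "tm_letter (tm m) = [tm (2 * m), tm (Suc (2 * m))]"
    using tm_le_1[of m] by auto
  then show ?case
    using Suc by (simp add: tm_mu_def)
qed

lemma funpow_tm_mu_0: "(tm_mu ^^ k) [0] = map tm [0..<2 ^ k]"
  by (induction k) (simp_all add: tm_mu_map_tm)

lemma thue_morse_eq_tm: "thue_morse n = tm n"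
proof -
  have "n < 2 ^ Suc n"
    by (induction n) auto
  then show ?thesis
    unfolding thue_morse_def funpow_tm_mu_0 by simp
qed

lemma tm_prefix_eq: "tm_prefix n = map tm [0..<n]"
  by (simp add: tm_prefix_def thue_morse_eq_tm)

lemma tm_double_neq: "tm (2 * n) \<noteq> tm (2 * n + 1)"
  using tm_le_1[of n] by simp arith

lemma tm_even_neq_Suc: "even p \<Longrightarrow> tm p \<noteq> tm (Suc p)"
  using tm_double_neq by (elim evenE) simp

lemma tm_no_cube_letter: "\<not> (tm p = tm (p + 1) \<and> tm (p + 1) = tm (p + 2))"
  using tm_even_neq_Suc[of p] tm_even_neq_Suc[of "Suc p"] by (cases "even p") auto

lemma tm_no_alternating_5:
  "\<not> (tm p \<noteq> tm (p + 1) \<and> tm (p + 1) \<noteq> tm (p + 2) \<and> tm (p + 2) \<noteq> tm (p + 3) \<and> tm (p + 3) \<noteq> tm (p + 4))"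
proof
  assume alt: "tm p \<noteq> tm (p + 1) \<and> tm (p + 1) \<noteq> tm (p + 2) \<and> tm (p + 2) \<noteq> tm (p + 3) \<and> tm (p + 3) \<noteq> tm (p + 4)"
  have bin: "tm k = 0 \<or> tm k = 1" for k
    using tm_le_1[of k] by arith
  obtain q where "even q" "tm q = tm (q + 2)" "tm (q + 2) = tm (q + 4)"
  proof (cases "even p")
    case True
    then show ?thesis
      using that[of p] alt bin[of p] bin[of "p + 1"] bin[of "p + 2"] bin[of "p + 3"] bin[of "p + 4"]
      by auto
  next
    case False
    then obtain q where q: "p = Suc q" "even q"
      by (cases p) auto
    then have "tm q \<noteq> tm p" and shift: "q + 2 = p + 1" "q + 4 = p + 3"
      using tm_even_neq_Suc by auto
    then show ?thesis
      using that[of q] q(2) alt bin[of q] bin[of p] bin[of "p + 1"] bin[of "p + 2"] bin[of "p + 3"]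
      unfolding shift by auto
  qed
  moreover from \<open>even q\<close> obtain c where "q = 2 * c" ..
  moreover from this have "q + 2 = 2 * (c + 1)" "q + 4 = 2 * (c + 2)"
    by simp_all
  ultimately have "tm c = tm (c + 1)" "tm (c + 1) = tm (c + 2)"
    by (simp_all only: tm_double)
  then show False
    using tm_no_cube_letter by blast
qed

section \<open>Attractors for the factors of length at least two\<close>

definition same_tm_factor :: "nat \<Rightarrow> nat \<Rightarrow> nat \<Rightarrow> bool" where
  "same_tm_factor a p l \<longleftrightarrow> (\<forall>j<l. tm (a + j) = tm (p + j))"

lemma same_tm_factor_iff_map: "same_tm_factor a p l \<longleftrightarrow> map tm [a..<a + l] = map tm [p..<p + l]"
  unfolding same_tm_factor_def by (auto simp: list_eq_iff_nth_eq)

lemma same_tm_factor_2: "same_tm_factor a p 2 \<longleftrightarrow> tm a = tm p \<and> tm (Suc a) = tm (Suc p)"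
  by (auto simp: same_tm_factor_def less_2_cases_iff)

lemma same_tm_factor_even_start:
  assumes "same_tm_factor a (2 * b) l" "4 \<le> l"
  shows "even a"
proof (rule ccontr)
  assume "odd a"
  then obtain d where a: "a = 2 * d + 1"
    using oddE by blast
  \<comment> \<open>The two letter pairs at 2b, 2b+2 and the pairs at the even positions 2d, 2d+2 interleave
    to an alternating factor of length 5 at 2d.\<close>
  have copy: "tm (a + j) = tm (2 * b + j)" if "j < 4" for j
    using assms that unfolding same_tm_factor_def by simp
  have "tm (2 * d) \<noteq> tm (2 * d + 1)"
    using tm_double_neq[of d] by simp
  moreover have "tm (2 * d + 1) \<noteq> tm (2 * d + 2)"
    using tm_double_neq[of b] copy[of 0] copy[of 1] unfolding a by (simp add: add.assoc)
  moreover have "tm (2 * d + 2) \<noteq> tm (2 * d + 3)"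
    using tm_double_neq[of "d + 1"] by (simp add: numeral_eq_Suc)
  moreover have "tm (2 * d + 3) \<noteq> tm (2 * d + 4)"
    using tm_double_neq[of "b + 1"] copy[of 2] copy[of 3] unfolding a by (simp add: numeral_eq_Suc)
  ultimately show False
    using tm_no_alternating_5[of "2 * d"] by blast
qed

lemma same_tm_factor_double:
  assumes "same_tm_factor c p m" "s + l \<le> 2 * m"
  shows "same_tm_factor (2 * c + s) (2 * p + s) l"
  unfolding same_tm_factor_def
proof (intro allI impI)
  fix j assume "j < l"
  define k where "k = s + j"
  have "k div 2 < m"
    using \<open>j < l\<close> assms(2) k_def by simp
  then have "tm (c + k div 2) = tm (p + k div 2)"
    using assms(1) unfolding same_tm_factor_def by blast
  moreover have "2 * c + s + j = 2 * (c + k div 2) + k mod 2" "2 * p + s + j = 2 * (p + k div 2) + k mod 2"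
    using k_def by simp_all
  ultimately show "tm (2 * c + s + j) = tm (2 * p + s + j)"
    by (simp only: tm_double_plus[of "k mod 2"] mod_less_divisor zero_less_numeral)
qed

lemma same_tm_factor_half:
  assumes "same_tm_factor (2 * c) (2 * p) (2 * m)"
  shows "same_tm_factor c p m"
  unfolding same_tm_factor_def
proof (intro allI impI)
  fix j assume "j < m"
  then have "tm (2 * c + 2 * j) = tm (2 * p + 2 * j)"
    using assms unfolding same_tm_factor_def by simp
  then show "tm (c + j) = tm (p + j)"
    by (metis distrib_left tm_double)
qed

text \<open>A weak attractor only has to meet an occurrence of each factor of length at least 2;
  this property passes from a prefix to the prefix of half the length.  An edge attractor has to
  contain both i and i + 1 of such an occurrence, for some i in S; this property passes from
  the prefixes of lengths k and k + 1 to those of lengths 2k and 2k + 1, via S \<mapsto> 2S + 1.\<close>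

definition tm_weak_attractor :: "nat set \<Rightarrow> nat \<Rightarrow> bool" where
  "tm_weak_attractor S n \<longleftrightarrow> (\<forall>a l. 2 \<le> l \<longrightarrow> a + l \<le> n \<longrightarrow>
     (\<exists>p i. p + l \<le> n \<and> same_tm_factor a p l \<and> i \<in> S \<and> p \<le> i \<and> i < p + l))"

definition tm_edge_attractor :: "nat set \<Rightarrow> nat \<Rightarrow> bool" where
  "tm_edge_attractor S n \<longleftrightarrow> (\<forall>i\<in>S. i + 1 < n) \<and> (\<forall>a l. 2 \<le> l \<longrightarrow> a + l \<le> n \<longrightarrow>
     (\<exists>p i. p + l \<le> n \<and> same_tm_factor a p l \<and> i \<in> S \<and> p \<le> i \<and> i + 1 < p + l))"

lemma tm_weak_attractor_half:
  assumes "tm_weak_attractor S n"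
  shows "tm_weak_attractor ((\<lambda>i. i div 2) ` S) (n div 2)"
  unfolding tm_weak_attractor_def
proof (intro allI impI)
  fix c m assume m: "2 \<le> m" and cm: "c + m \<le> n div 2"
  then have "2 \<le> 2 * m" "2 * c + 2 * m \<le> n"
    by linarith+
  then obtain p' i where occ: "p' + 2 * m \<le> n" "same_tm_factor (2 * c) p' (2 * m)"
    and i: "i \<in> S" "p' \<le> i" "i < p' + 2 * m"
    using assms unfolding tm_weak_attractor_def by blast
  have "even p'"
    using same_tm_factor_even_start[of p' c "2 * m"] occ(2) m
    unfolding same_tm_factor_def by simp
  then obtain p where p: "p' = 2 * p" ..
  have "same_tm_factor c p m"
    using same_tm_factor_half occ(2) p by blast
  moreover have "p + m \<le> n div 2" "p \<le> i div 2" "i div 2 < p + m"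
    using occ(1) i(2,3) p by linarith+
  ultimately show "\<exists>p i'. p + m \<le> n div 2 \<and> same_tm_factor c p m \<and> i' \<in> (\<lambda>i. i div 2) ` S \<and> p \<le> i' \<and> i' < p + m"
    using i(1) by blast
qed

lemma tm_edge_attractor_square_letter:
  assumes "tm_edge_attractor S k" "7 \<le> k" "x \<le> 1"
  obtains i where "i \<in> S" "tm i = x" "tm (i + 1) = x"
proof -
  \<comment> \<open>t = 0110100..., so 11 occurs at position 1 and 00 at position 5.\<close>
  define a :: nat where "a = (if x = 0 then 5 else 1)"
  have "tm 1 = 1" "tm 2 = 1" "tm 5 = 0" "tm 6 = 0"
    by code_simp+
  then have "tm a = x" "tm (a + 1) = x" "a + 2 \<le> k"
    using assms(2,3) by (auto simp: a_def numeral_2_eq_2)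
  then obtain p i where occ: "same_tm_factor a p 2" "i \<in> S" "p \<le> i" "i + 1 < p + 2"
    using assms(1) unfolding tm_edge_attractor_def by blast
  moreover have "i = p"
    using occ(3,4) by linarith
  ultimately show thesis
    using that \<open>tm a = x\<close> \<open>tm (a + 1) = x\<close> unfolding same_tm_factor_2 by simp
qed

text \<open>A factor x(1-x) at an even position is the image of a single letter; it reappears
  across the edge 2i+1, 2i+2 whenever (1-x)(1-x) occurs at i.\<close>

lemma tm_edge_attractor_double_pair:
  assumes "tm_edge_attractor S k" "7 \<le> k"
  obtains i where "i \<in> S" "same_tm_factor (2 * c) (2 * i + 1) 2" "2 * i + 3 \<le> 2 * k"
proof -
  obtain i where i: "i \<in> S" "tm i = 1 - tm c" "tm (i + 1) = 1 - tm c"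
    using tm_edge_attractor_square_letter[OF assms diff_le_self] by blast
  have "tm (Suc (2 * i)) = tm (2 * c)"
    using i tm_le_1[of c] by simp
  moreover have "tm (Suc (Suc (2 * i))) = tm (Suc (2 * c))"
    using i tm_double[of "Suc i"] by simp
  ultimately have "same_tm_factor (2 * c) (2 * i + 1) 2"
    unfolding same_tm_factor_2 by simp
  moreover have "i + 1 < k"
    using assms(1) i(1) unfolding tm_edge_attractor_def by blast
  ultimately show thesis
    using that i(1) by simp
qed

text \<open>Any other factor t[a..a+l-1] lies inside the image of t[c..d], where c = a div 2 and
  d = (a+l-1) div 2; an edge occurrence of t[c..d] in the prefix of length k, or k + e when the
  factor reaches the last position, doubles to one of t[a..a+l-1].\<close>

lemma tm_edge_attractor_double_long:
  assumes "tm_edge_attractor S k" "tm_edge_attractor S (k + e)" "e \<le> 1"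
    and "2 \<le> l" "a + l \<le> 2 * k + e" "3 \<le> l \<or> odd a"
  obtains p i where "p + l \<le> 2 * k + e" "same_tm_factor a p l" "i \<in> S" "p \<le> 2 * i + 1" "2 * i + 2 < p + l"
proof -
  define c s d r where "c = a div 2" "s = a mod 2" "d = (a + l - 1) div 2" "r = (a + l - 1) mod 2"
  then have a: "a = 2 * c + s" "s < 2" "odd a \<Longrightarrow> s = 1"
    and b: "a + l - 1 = 2 * d + r" "r < 2"
    by (simp_all add: odd_iff_mod_2_eq_one)
  have "c < d"
    using a b assms(4,6) by linarith
  define K where "K = (if d < k then k else k + e)"
  have "d < K"
    using b assms(4,5) unfolding K_def by auto
  moreover have "tm_edge_attractor S K"
    using assms(1,2) unfolding K_def by simp
  moreover have "2 \<le> d + 1 - c" "c + (d + 1 - c) \<le> K"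
    using \<open>c < d\<close> \<open>d < K\<close> by simp_all
  ultimately obtain p i where occ: "p + (d + 1 - c) \<le> K" "same_tm_factor c p (d + 1 - c)"
    and i: "i \<in> S" "p \<le> i" "i + 1 < p + (d + 1 - c)"
    unfolding tm_edge_attractor_def by blast
  have "same_tm_factor a (2 * p + s) l"
    using same_tm_factor_double[OF occ(2), of s l] a b assms(4) by simp
  moreover have "2 * p + s + l \<le> 2 * k + e"
  proof (cases "d < k")
    case True
    then show ?thesis using occ(1) a b assms(4) unfolding K_def by simp
  next
    case False
    then show ?thesis using occ(1) a b assms(3-5) \<open>c < d\<close> unfolding K_def by simp
  qed
  moreover have "2 * p + s \<le> 2 * i + 1" "2 * i + 2 < 2 * p + s + l"
    using i(2,3) a b assms(4) \<open>c < d\<close> by linarith+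
  ultimately show thesis
    using that i(1) by blast
qed

lemma tm_edge_attractor_double:
  assumes "tm_edge_attractor S k" "tm_edge_attractor S (k + e)" "e \<le> 1" "7 \<le> k"
  shows "tm_edge_attractor ((\<lambda>i. 2 * i + 1) ` S) (2 * k + e)"
  unfolding tm_edge_attractor_def
proof (intro conjI ballI allI impI)
  fix i' assume "i' \<in> (\<lambda>i. 2 * i + 1) ` S"
  then obtain i where "i \<in> S" "i' = 2 * i + 1"
    by blast
  moreover have "i + 1 < k"
    using assms(1) \<open>i \<in> S\<close> unfolding tm_edge_attractor_def by blast
  ultimately show "i' + 1 < 2 * k + e"
    by simp
next
  fix a l assume l: "2 \<le> l" "a + l \<le> 2 * k + e"
  show "\<exists>p i'. p + l \<le> 2 * k + e \<and> same_tm_factor a p l \<and> i' \<in> (\<lambda>i. 2 * i + 1) ` S \<and> p \<le> i' \<and> i' + 1 < p + l"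
  proof (cases "l = 2 \<and> even a")
    case True
    then obtain c where "a = 2 * c"
      by blast
    moreover obtain i where "i \<in> S" "same_tm_factor (2 * c) (2 * i + 1) 2" "2 * i + 3 \<le> 2 * k"
      using tm_edge_attractor_double_pair[OF assms(1,4)] by blast
    ultimately show ?thesis
      using True by (intro exI[of _ "2 * i + 1"]) auto
  next
    case False
    then have "3 \<le> l \<or> odd a"
      using l(1) by auto
    then obtain p i where "p + l \<le> 2 * k + e" "same_tm_factor a p l" "i \<in> S" "p \<le> 2 * i + 1" "2 * i + 2 < p + l"
      using tm_edge_attractor_double_long[OF assms(1-3) l] by blast
    then show ?thesis
      by (intro exI[of _ p] exI[of _ "2 * i + 1"]) auto
  qed
qed

lemma factor_map_upt:
  assumes "p \<le> q" "q < n"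
  shows "factor (map f [0..<n]) p q = map f [p..<Suc q]"
  using assms unfolding factor_def by (simp add: drop_map take_map)

lemma string_attractor_imp_tm_weak_attractor:
  assumes "string_attractor (tm_prefix n) S"
  shows "tm_weak_attractor S n"
  unfolding tm_weak_attractor_def
proof (intro allI impI)
  fix a l assume l: "2 \<le> l" "a + l \<le> n"
  let ?w = "map tm [0..<n]"
  have "a \<le> a + l - 1" "a + l - 1 < length ?w"
    using l by simp_all
  then obtain p q i where occ: "p \<le> q" "q < length ?w" "factor ?w p q = factor ?w a (a + l - 1)"
    and i: "i \<in> S" "p \<le> i" "i \<le> q"
    using assms unfolding string_attractor_def tm_prefix_eq by blast
  then have eq: "map tm [p..<Suc q] = map tm [a..<a + l]"
    using l by (simp add: factor_map_upt)
  moreover have "Suc q = p + l"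
    using arg_cong[OF eq, of length] occ(1) by simp
  ultimately have "same_tm_factor a p l"
    by (simp add: same_tm_factor_iff_map)
  then show "\<exists>p i. p + l \<le> n \<and> same_tm_factor a p l \<and> i \<in> S \<and> p \<le> i \<and> i < p + l"
    using occ(2) i \<open>Suc q = p + l\<close> by (intro exI[of _ p] exI[of _ i]) auto
qed

lemma tm_edge_attractor_imp_string_attractor:
  assumes "tm_edge_attractor S n" "7 \<le> n"
  shows "string_attractor (tm_prefix n) S"
  unfolding string_attractor_def tm_prefix_eq length_map length_upt diff_zero
proof (intro conjI allI impI)
  let ?w = "map tm [0..<n]"
  show "S \<subseteq> {0..<n}"
    using assms(1) unfolding tm_edge_attractor_def by force
  fix p q assume pq: "p \<le> q \<and> q < n"
  show "\<exists>p' q' i. p' \<le> q' \<and> q' < n \<and> factor ?w p' q' = factor ?w p q \<and> i \<in> S \<and> p' \<le> i \<and> i \<le> q'"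
  proof (cases "p = q")
    case True
    obtain i where i: "i \<in> S" "tm i = tm p" "tm (i + 1) = tm p"
      using tm_edge_attractor_square_letter[OF assms tm_le_1] by blast
    then have "i < n"
      using assms(1) unfolding tm_edge_attractor_def by fastforce
    then have "factor ?w i i = factor ?w p q"
      using pq True i(2) by (simp add: factor_map_upt)
    then show ?thesis
      using i(1) \<open>i < n\<close> by blast
  next
    case False
    define l where "l = Suc q - p"
    have l: "2 \<le> l" "p + l \<le> n"
      using pq False l_def by auto
    then obtain p' i where occ: "p' + l \<le> n" "same_tm_factor p p' l" "i \<in> S" "p' \<le> i" "i + 1 < p' + l"
      using assms(1) unfolding tm_edge_attractor_def by blast
    have "factor ?w p' (p' + l - 1) = map tm [p'..<p' + l]"
      using factor_map_upt[of p' "p' + l - 1" n tm] occ(1) l(1) by simp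
    also have "\<dots> = map tm [p..<p + l]"
      using occ(2) by (simp add: same_tm_factor_iff_map)
    also have "\<dots> = factor ?w p q"
      using factor_map_upt[of p q n tm] pq l_def by simp
    finally have "factor ?w p' (p' + l - 1) = factor ?w p q" .
    then show ?thesis
      using occ l by (intro exI[of _ p'] exI[of _ "p' + l - 1"] exI[of _ i]) auto
  qed
qed

section \<open>Hitting sets and executable attractor checks\<close>

fun occurrences :: "'a list \<Rightarrow> 'a list \<Rightarrow> nat list" where
  "occurrences [] f = (if f = [] then [0] else [])"
| "occurrences (x # w) f = (if take (length f) (x # w) = f then [0] else []) @ map Suc (occurrences w f)"

definition covered_positions :: "'a list \<Rightarrow> 'a list \<Rightarrow> nat list" where
  "covered_positions w f = concat (map (\<lambda>p. [p..<p + length f]) (occurrences w f))"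

lemma in_occurrences_iff:
  "p \<in> set (occurrences w f) \<longleftrightarrow> p + length f \<le> length w \<and> take (length f) (drop p w) = f"
proof (induction w arbitrary: p)
  case Nil
  then show ?case
    by auto
next
  case (Cons x w)
  have "length f \<le> length (x # w)" if "take (length f) (x # w) = f"
    using arg_cong[OF that, of length] by simp
  then show ?case
    using Cons.IH by (cases p) auto
qed

lemma in_covered_positions_iff:
  "i \<in> set (covered_positions w f) \<longleftrightarrow> (\<exists>p\<in>set (occurrences w f). p \<le> i \<and> i < p + length f)"
  unfolding covered_positions_def by auto

lemma factor_eq_take_drop: "f \<noteq> [] \<Longrightarrow> factor w p (p + length f - 1) = take (length f) (drop p w)"
  unfolding factor_def by (simp add: Suc_diff_le)

lemma string_attractor_meets_covered_positions:
  assumes "string_attractor w S" "f \<noteq> []" "occurrences w f \<noteq> []"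
  shows "\<exists>i\<in>S. i \<in> set (covered_positions w f)"
proof -
  obtain p where "p \<in> set (occurrences w f)"
    using assms(3) by (cases "occurrences w f") auto
  then have p: "p + length f \<le> length w" "take (length f) (drop p w) = f"
    by (simp_all add: in_occurrences_iff)
  moreover have "0 < length f"
    using assms(2) by simp
  ultimately have "p \<le> p + length f - 1" "p + length f - 1 < length w"
    by linarith+
  then obtain p' q' i where occ: "p' \<le> q'" "q' < length w" "factor w p' q' = factor w p (p + length f - 1)"
    and i: "i \<in> S" "p' \<le> i" "i \<le> q'"
    using assms(1) unfolding string_attractor_def by blast
  have "factor w p (p + length f - 1) = f"
    using factor_eq_take_drop[OF assms(2), of w p] p(2) by simp
  then have "factor w p' q' = f"
    using occ(3) by simp
  then have "Suc q' = p' + length f"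
    using occ(1,2) unfolding factor_def by auto
  then have "take (length f) (drop p' w) = f"
    using \<open>factor w p' q' = f\<close> unfolding factor_def by simp
  then have "p' \<in> set (occurrences w f)"
    using occ(2) \<open>Suc q' = p' + length f\<close> by (simp add: in_occurrences_iff)
  moreover have "p' \<le> i" "i < p' + length f"
    using i(2,3) \<open>Suc q' = p' + length f\<close> by simp_all
  ultimately show ?thesis
    using i(1) unfolding in_covered_positions_iff by blast
qed

lemma tm_weak_attractor_meets_covered_positions:
  assumes "tm_weak_attractor S n" "2 \<le> length f" "occurrences (map tm [0..<n]) f \<noteq> []"
  shows "\<exists>i\<in>S. i \<in> set (covered_positions (map tm [0..<n]) f)"
proof -
  let ?w = "map tm [0..<n]"
  obtain a where "a \<in> set (occurrences ?w f)"
    using assms(3) by (cases "occurrences ?w f") auto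
  then have a: "a + length f \<le> n" "take (length f) (drop a ?w) = f"
    by (simp_all add: in_occurrences_iff)
  then have f: "f = map tm [a..<a + length f]"
    by (simp add: drop_map take_map)
  obtain p i where occ: "p + length f \<le> n" "same_tm_factor a p (length f)" and i: "i \<in> S" "p \<le> i" "i < p + length f"
    using assms(1,2) a(1) unfolding tm_weak_attractor_def by blast
  have "take (length f) (drop p ?w) = map tm [p..<p + length f]"
    using occ(1) by (simp add: drop_map take_map)
  also have "\<dots> = f"
    using occ(2) f by (simp add: same_tm_factor_iff_map)
  finally have "p \<in> set (occurrences ?w f)"
    using occ(1) by (simp add: in_occurrences_iff)
  then show ?thesis
    using i in_covered_positions_iff by blast
qed

text \<open>The search is
  complete because a set meeting m # Ms contains some i from m, and its other elements must meet
  the members of Ms that miss i.\<close>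

fun no_hitting_set :: "nat \<Rightarrow> nat list list \<Rightarrow> bool" where
  "no_hitting_set k [] \<longleftrightarrow> False"
| "no_hitting_set 0 (m # Ms) \<longleftrightarrow> True"
| "no_hitting_set (Suc k) (m # Ms) \<longleftrightarrow> list_all (\<lambda>i. no_hitting_set k (filter (\<lambda>m'. i \<notin> set m') Ms)) m"

lemma no_hitting_set_imp_card_gt:
  assumes "no_hitting_set k Ms" "finite S" "\<forall>m\<in>set Ms. set m \<inter> S \<noteq> {}"
  shows "k < card S"
  using assms
proof (induction k Ms arbitrary: S rule: no_hitting_set.induct)
  case (2 m Ms)
  then show ?case
    by (cases "S = {}") auto
next
  case (3 k m Ms)
  then obtain i where i: "i \<in> S" "i \<in> set m"
    by auto
  have "no_hitting_set k (filter (\<lambda>m'. i \<notin> set m') Ms)"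
    using "3.prems"(1) i(2) by (simp add: list_all_iff)
  moreover have "\<forall>m'\<in>set (filter (\<lambda>m'. i \<notin> set m') Ms). set m' \<inter> (S - {i}) \<noteq> {}"
    using "3.prems"(3) by auto
  ultimately have "k < card (S - {i})"
    using "3.IH"[OF i(2)] "3.prems"(2) by blast
  then show ?case
    using "3.prems"(2) i(1) by (simp add: card_Diff_singleton)
qed (simp)

definition attractor_check :: "'a list \<Rightarrow> nat list \<Rightarrow> bool" where
  "attractor_check w A \<longleftrightarrow> (\<forall>p\<in>set [0..<length w]. \<forall>q\<in>set [p..<length w].
     (\<exists>i\<in>set A. p \<le> i \<and> i \<le> q) \<or>
     (\<exists>i\<in>set A. \<exists>p'\<in>set [i - (q - p)..<Suc i].
        p' + (q - p) < length w \<and> factor w p' (p' + (q - p)) = factor w p q))"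

lemma attractor_check_sound:
  assumes "attractor_check w A" "\<forall>i\<in>set A. i < length w"
  shows "string_attractor w (set A)"
  unfolding string_attractor_def
proof (intro conjI allI impI)
  show "set A \<subseteq> {0..<length w}"
    using assms(2) by auto
  fix p q assume pq: "p \<le> q \<and> q < length w"
  then have "p \<in> set [0..<length w]" "q \<in> set [p..<length w]"
    by auto
  then have "(\<exists>i\<in>set A. p \<le> i \<and> i \<le> q) \<or>
    (\<exists>i\<in>set A. \<exists>p'\<in>set [i - (q - p)..<Suc i]. p' + (q - p) < length w \<and>
      factor w p' (p' + (q - p)) = factor w p q)"
    using assms(1) unfolding attractor_check_def by blast
  then consider (inside) i where "i \<in> set A" "p \<le> i" "i \<le> q"
    | (shifted) i p' where "i \<in> set A" "i - (q - p) \<le> p'" "p' \<le> i" "p' + (q - p) < length w"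
        "factor w p' (p' + (q - p)) = factor w p q"
    unfolding set_upt Bex_def atLeastLessThan_iff less_Suc_eq_le by blast
  then show "\<exists>p' q' i. p' \<le> q' \<and> q' < length w \<and> factor w p' q' = factor w p q \<and> i \<in> set A \<and> p' \<le> i \<and> i \<le> q'"
  proof cases
    case inside
    then show ?thesis
      using pq by blast
  next
    case shifted
    then show ?thesis
      by (intro exI[of _ p'] exI[of _ "p' + (q - p)"] exI[of _ i]) auto
  qed
qed

definition edge_attractor_check :: "'a list \<Rightarrow> nat list \<Rightarrow> bool" where
  "edge_attractor_check w A \<longleftrightarrow> (\<forall>i\<in>set A. i + 1 < length w) \<and>
     (\<forall>p\<in>set [0..<length w]. \<forall>q\<in>set [Suc p..<length w].
       (\<exists>i\<in>set A. p \<le> i \<and> i < q) \<or>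
       (\<exists>i\<in>set A. \<exists>p'\<in>set [Suc i - (q - p)..<Suc i].
          p' + (q - p) < length w \<and> factor w p' (p' + (q - p)) = factor w p q))"

lemma edge_attractor_check_sound:
  assumes "edge_attractor_check (map tm [0..<n]) A"
  shows "tm_edge_attractor (set A) n"
  unfolding tm_edge_attractor_def
proof (intro conjI allI impI ballI)
  let ?w = "map tm [0..<n]"
  fix i assume "i \<in> set A"
  then show "i + 1 < n"
    using assms unfolding edge_attractor_check_def by simp
next
  let ?w = "map tm [0..<n]"
  fix a l assume l: "2 \<le> l" "a + l \<le> n"
  define q where "q = a + l - 1"
  have q: "a < q" "q < n" "q - a = l - 1"
    using l q_def by auto
  then have "a \<in> set [0..<length ?w]" "q \<in> set [Suc a..<length ?w]"
    by auto
  then have "(\<exists>i\<in>set A. a \<le> i \<and> i < q) \<or>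
    (\<exists>i\<in>set A. \<exists>p\<in>set [Suc i - (q - a)..<Suc i]. p + (q - a) < length ?w \<and>
      factor ?w p (p + (q - a)) = factor ?w a q)"
    using assms unfolding edge_attractor_check_def by blast
  then consider (inside) i where "i \<in> set A" "a \<le> i" "i < q"
    | (shifted) i p where "i \<in> set A" "Suc i - (q - a) \<le> p" "p \<le> i" "p + (q - a) < n"
        "factor ?w p (p + (q - a)) = factor ?w a q"
    unfolding set_upt Bex_def atLeastLessThan_iff less_Suc_eq_le length_map length_upt diff_zero by blast
  then show "\<exists>p i. p + l \<le> n \<and> same_tm_factor a p l \<and> i \<in> set A \<and> p \<le> i \<and> i + 1 < p + l"
  proof cases
    case inside
    then show ?thesis
      using l q_def unfolding same_tm_factor_def by (intro exI[of _ a] exI[of _ i]) auto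
  next
    case shifted
    then have "map tm [p..<p + l] = map tm [a..<a + l]"
      using q l q_def by (simp add: factor_map_upt)
    then show ?thesis
      using shifted q l by (intro exI[of _ p] exI[of _ i]) (auto simp: same_tm_factor_iff_map)
  qed
qed

section \<open>Certificates and the induction on the prefix length\<close>

lemma list_all_uptD: "list_all P [a..<b] \<Longrightarrow> a \<le> n \<Longrightarrow> n < b \<Longrightarrow> P n"
  unfolding list_all_iff set_upt by simp

definition certifies_attractor_size :: "'a list \<Rightarrow> nat list \<Rightarrow> 'a list list \<Rightarrow> bool" where
  "certifies_attractor_size w A F \<longleftrightarrow>
     attractor_check w A \<and> (\<forall>i\<in>set A. i < length w) \<and> distinct A \<and>
     (\<forall>f\<in>set F. f \<noteq> [] \<and> occurrences w f \<noteq> []) \<and>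
     no_hitting_set (length A - 1) (map (covered_positions w) F)"

lemma string_attractor_finite: "string_attractor w S \<Longrightarrow> finite S"
  unfolding string_attractor_def using finite_subset by blast

lemma min_attractor_size_eqI:
  assumes "string_attractor w S" "card S = k" "\<And>S'. string_attractor w S' \<Longrightarrow> k \<le> card S'"
  shows "min_attractor_size w = k"
  unfolding min_attractor_size_def by (rule Least_equality) (use assms in auto)

lemma min_attractor_size_certified:
  assumes "certifies_attractor_size w A F"
  shows "min_attractor_size w = length A"
proof (rule min_attractor_size_eqI)
  show "string_attractor w (set A)" "card (set A) = length A"
    using assms attractor_check_sound distinct_card unfolding certifies_attractor_size_def by blast+
  fix S assume S: "string_attractor w S"
  have "set (covered_positions w f) \<inter> S \<noteq> {}" if "f \<in> set F" for f
  proof -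
    have "f \<noteq> []" "occurrences w f \<noteq> []"
      using assms that unfolding certifies_attractor_size_def by auto
    then show ?thesis
      using string_attractor_meets_covered_positions[OF S] by auto
  qed
  then have "\<forall>m\<in>set (map (covered_positions w) F). set m \<inter> S \<noteq> {}"
    by simp
  moreover have "no_hitting_set (length A - 1) (map (covered_positions w) F)"
    using assms unfolding certifies_attractor_size_def by simp
  ultimately have "length A - 1 < card S"
    using no_hitting_set_imp_card_gt string_attractor_finite[OF S] by blast
  then show "length A \<le> card S"
    by linarith
qed

definition tm_attractor_size :: "nat \<Rightarrow> nat" where
  "tm_attractor_size n =
    (if n = 1 then 1
     else if n \<le> 6 then 2
     else if (7 \<le> n \<and> n \<le> 14) \<or> (17 \<le> n \<and> n \<le> 24) then 3
     else 4)"

text \<open>Certificates found by computer search.  For n \<le> 24, small_prefix_attractors ! n is an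
  attractor of t[0..n-1] of the claimed size, and no smaller set meets an occurrence of every
  factor in small_prefix_obstructions ! n.  For 25 \<le> n < 50, no set of size 3 meets an occurrence
  of every factor in large_prefix_obstructions ! (n - 25).\<close>

definition small_prefix_attractors :: "nat list list" where
  "small_prefix_attractors =
    [[], [0], [0, 1], [0, 1], [0, 2],
     [1, 3], [1, 3], [1, 2, 5], [1, 2, 5], [1, 2, 5],
     [0, 2, 5], [2, 5, 7], [2, 5, 7], [2, 5, 10], [3, 7, 10],
     [1, 5, 9, 11], [1, 5, 9, 11], [5, 9, 13], [5, 9, 13], [5, 9, 13],
     [5, 9, 13], [7, 13, 17], [7, 13, 17], [7, 13, 17], [7, 13, 17]]"

definition small_prefix_obstructions :: "nat list list list" where
  "small_prefix_obstructions =
    [[],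
     [[0]],
     [[0], [1]],
     [[0], [1]],
     [[0], [1]],
     [[0], [1, 1]],
     [[1, 1], [0]],
     [[1, 1], [0, 0], [1, 0, 1], [0, 1]],
     [[1, 1], [0, 0], [1, 0, 1], [0, 1, 0], [0, 1]],
     [[0, 0], [1, 0, 1], [0, 1, 0], [1, 1], [0, 1]],
     [[0, 0], [1, 0, 1], [0, 1, 0], [1, 1], [0, 1]],
     [[1, 0, 1], [0, 0, 1], [0, 0], [1, 1, 0, 0]],
     [[1, 0, 1], [0, 1, 0], [1, 1], [0, 0], [1, 1, 0, 0]],
     [[1, 0, 1], [1, 1], [0, 0], [0, 1, 0, 0], [1, 1, 0, 0]],
     [[1, 1], [0, 0], [1, 1, 0, 1], [0, 1, 0, 0], [1, 1, 0, 0]],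
     [[0, 0], [1, 1, 0, 1], [0, 0, 1, 1], [1, 1, 0, 0], [1, 0, 1, 1]],
     [[0, 0], [1, 1, 0, 1], [0, 0, 1, 1], [1, 1, 0, 0], [1, 0, 1, 1]],
     [[1, 0, 1, 0], [1, 1, 0, 0], [1, 0, 1, 1]],
     [[0, 1, 0, 0], [1, 1, 0, 0], [1, 0, 1, 1]],
     [[0, 0, 1, 1], [1, 1, 0, 0], [1, 0, 1, 1], [0, 0]],
     [[0, 0, 1, 1], [1, 1, 0, 0], [1, 0, 1, 1], [0, 0]],
     [[0, 0, 1, 1], [1, 1, 0, 0], [1, 0, 1, 1], [0, 0]],
     [[0, 0, 1, 1], [1, 1, 0, 0], [1, 0, 1, 1], [0, 0]],
     [[0, 0, 1, 1], [1, 1, 0, 0], [1, 0, 1, 1, 0], [0, 0]],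
     [[0, 0, 1, 1], [1, 1, 0, 0], [0, 0], [1, 0, 1, 1, 0, 1]]]"

definition small_prefix_certified :: "nat \<Rightarrow> bool" where
  "small_prefix_certified n \<longleftrightarrow> length (small_prefix_attractors ! n) = tm_attractor_size n \<and>
     certifies_attractor_size (map tm [0..<n]) (small_prefix_attractors ! n) (small_prefix_obstructions ! n)"



lemma small_prefixes_certified: "list_all small_prefix_certified [1..<25]"
  by code_simp

lemma min_attractor_size_tm_prefix_small:
  assumes "1 \<le> n" "n \<le> 24"
  shows "min_attractor_size (tm_prefix n) = tm_attractor_size n"
proof -
  have "small_prefix_certified n"
    using list_all_uptD[OF small_prefixes_certified] assms by simp
  then show ?thesis
    unfolding small_prefix_certified_def tm_prefix_eq using min_attractor_size_certified by metis
qed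

definition certifies_weak_attractor_bound :: "nat list \<Rightarrow> nat \<Rightarrow> nat list list \<Rightarrow> bool" where
  "certifies_weak_attractor_bound w k F \<longleftrightarrow>
     (\<forall>f\<in>set F. 2 \<le> length f \<and> occurrences w f \<noteq> []) \<and>
     no_hitting_set k (map (covered_positions w) F)"

lemma tm_weak_attractor_card_gt_certified:
  assumes "certifies_weak_attractor_bound (map tm [0..<n]) k F" "tm_weak_attractor S n" "finite S"
  shows "k < card S"
proof -
  have "set (covered_positions (map tm [0..<n]) f) \<inter> S \<noteq> {}" if "f \<in> set F" for f
  proof -
    have "2 \<le> length f" "occurrences (map tm [0..<n]) f \<noteq> []"
      using assms(1) that unfolding certifies_weak_attractor_bound_def by auto
    then show ?thesis
      using tm_weak_attractor_meets_covered_positions[OF assms(2)] by auto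
  qed
  then have "\<forall>m\<in>set (map (covered_positions (map tm [0..<n])) F). set m \<inter> S \<noteq> {}"
    by simp
  moreover have "no_hitting_set k (map (covered_positions (map tm [0..<n])) F)"
    using assms(1) unfolding certifies_weak_attractor_bound_def by simp
  ultimately show ?thesis
    using no_hitting_set_imp_card_gt assms(3) by blast
qed

definition large_prefix_obstructions :: "nat list list list" where
  "large_prefix_obstructions =
    [[[0, 0, 1, 1], [1, 1, 0, 0, 1], [1, 0, 1, 1, 0, 1], [0, 1, 0, 0, 1, 0], [1, 0, 1, 1, 0, 0], [1, 1], [0, 0], [0, 0, 1, 0]],
     [[0, 0, 1, 1], [1, 1, 0, 0, 1, 0], [1, 0, 1, 1, 0, 1], [0, 1, 0, 0, 1, 0], [1, 0, 1, 1, 0, 0], [1, 1], [0, 0], [0, 0, 1, 0]],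
     [[0, 1, 0, 0, 1, 1], [1, 0, 1, 1, 0, 1], [0, 1, 0, 0, 1, 0], [1, 1, 0, 0, 1, 1], [0, 0, 1, 0]],
     [[0, 1, 0, 0, 1, 1], [1, 0, 1, 1, 0, 1], [0, 1, 0, 0, 1, 0], [1, 1, 0, 0, 1, 1], [0, 0, 1, 0]],
     [[0, 1, 0, 0, 1, 1], [1, 0, 1, 1, 0, 1], [0, 1, 0, 0, 1, 0], [1, 1, 0, 0, 1, 1], [0, 0, 1, 0]],
     [[0, 1, 0, 0, 1, 1], [1, 0, 1, 1, 0, 1], [0, 1, 0, 0, 1, 0], [1, 1, 0, 0, 1, 1], [0, 0, 1, 0]],
     [[0, 1, 0, 0, 1, 1], [1, 0, 1, 1, 0, 1], [0, 1, 0, 0, 1, 0], [1, 1, 0, 0, 1, 1], [0, 0, 1, 0]],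
     [[0, 1, 0, 0, 1, 1], [1, 0, 1, 1, 0, 1], [0, 1, 0, 0, 1, 0], [1, 1, 0, 0, 1, 1], [0, 0, 1, 0]],
     [[1, 0, 1, 1, 0, 1], [0, 1, 0, 0, 1, 0], [0, 0, 1, 1, 0, 1], [0, 1, 0, 0, 1, 1, 0], [0, 1, 0, 1]],
     [[0, 0, 1, 1, 0, 0], [1, 0, 1, 1, 0, 1], [0, 1, 0, 0, 1, 0], [0, 0, 1, 1, 0, 1], [1, 0, 1, 1]],
     [[1, 1, 0, 0, 1, 0], [1, 0, 1, 1, 0, 1], [0, 1, 0, 0, 1, 0], [1, 0, 1, 1, 0, 0], [0, 0, 1, 1, 0, 1], [0, 0, 1, 0], [1, 1], [0, 0]],
     [[1, 1, 0, 0, 1, 0], [1, 0, 1, 1, 0, 1], [0, 1, 0, 0, 1, 0], [1, 0, 1, 1, 0, 0], [0, 0, 1, 1, 0, 1], [0, 0, 1, 0], [1, 1], [0, 0]],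
     [[1, 0, 1, 1, 0, 1], [0, 1, 0, 0, 1, 0], [1, 1, 0, 0, 1, 1], [0, 0, 1, 1, 0, 1], [1, 1, 0, 0, 1, 0, 1], [0, 1, 0, 1], [0, 1, 0, 0, 1, 1]],
     [[1, 0, 1, 1, 0, 1], [0, 1, 0, 0, 1, 0], [1, 1, 0, 0, 1, 1], [0, 0, 1, 1, 0, 1], [1, 0, 1, 1], [1, 1, 0, 0, 1, 0, 1, 1], [0, 1, 0, 0, 1, 1]],
     [[1, 0, 1, 1, 0, 1], [0, 1, 0, 0, 1, 0], [1, 1, 0, 0, 1, 1], [0, 0, 1, 0], [0, 1, 0, 0, 1, 1]],
     [[1, 0, 1, 1, 0, 1], [0, 1, 0, 0, 1, 0], [1, 1, 0, 0, 1, 1], [0, 0, 1, 0], [0, 1, 0, 0, 1, 1]],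
     [[1, 0, 1, 1, 0, 1], [0, 1, 0, 0, 1, 0], [1, 1, 0, 0, 1, 1], [0, 0, 1, 0], [0, 1, 0, 0, 1, 1]],
     [[1, 0, 1, 1, 0, 1], [0, 1, 0, 0, 1, 0], [1, 1, 0, 0, 1, 1], [0, 0, 1, 0], [0, 1, 0, 0, 1, 1]],
     [[1, 0, 1, 1, 0, 1], [0, 1, 0, 0, 1, 0], [0, 0, 1, 1, 0, 1], [1, 0, 1, 1], [0, 0, 1, 1, 0, 0]],
     [[1, 0, 1, 1, 0, 1], [0, 1, 0, 0, 1, 0], [0, 0, 1, 1, 0, 1], [1, 0, 1, 1], [0, 0, 1, 1, 0, 0]],
     [[1, 0, 1, 1, 0, 1], [0, 1, 0, 0, 1, 0], [0, 0, 1, 0], [0, 1, 0, 0, 1, 1], [1, 1, 0, 0, 1, 1]],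
     [[1, 0, 1, 1, 0, 1], [0, 1, 0, 0, 1, 0], [0, 0, 1, 0], [0, 1, 0, 0, 1, 1], [1, 1, 0, 0, 1, 1]],
     [[1, 0, 1, 1, 0, 1], [0, 1, 0, 0, 1, 0], [0, 0, 1, 0], [0, 1, 0, 0, 1, 1], [1, 1, 0, 0, 1, 1]],
     [[1, 0, 1, 1, 0, 1], [0, 1, 0, 0, 1, 0], [0, 0, 1, 0], [0, 1, 0, 0, 1, 1], [1, 1, 0, 0, 1, 1]],
     [[1, 0, 1, 1, 0, 1], [0, 1, 0, 0, 1, 0, 1], [0, 0, 1, 1, 0, 1, 0, 0, 1, 1], [0, 0, 1, 1, 0, 1, 0, 0, 1, 0], [0, 1, 0, 1]]]"

definition large_prefix_certified :: "nat \<Rightarrow> bool" where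
  "large_prefix_certified n \<longleftrightarrow>
     certifies_weak_attractor_bound (map tm [0..<n]) 3 (large_prefix_obstructions ! (n - 25))"

lemma large_prefixes_certified: "list_all large_prefix_certified [25..<50]"
  by code_simp

lemma tm_weak_attractor_card_ge_4:
  assumes "25 \<le> n" "tm_weak_attractor S n" "finite S"
  shows "4 \<le> card S"
  using assms
proof (induction n arbitrary: S rule: less_induct)
  case (less n)
  show ?case
  proof (cases "n < 50")
    case True
    then have "large_prefix_certified n"
      using list_all_uptD[OF large_prefixes_certified] less.prems(1) by simp
    then have "3 < card S"
      using tm_weak_attractor_card_gt_certified less.prems(2,3)
      unfolding large_prefix_certified_def by blast
    then show ?thesis
      by simp
  next
    case False
    have "4 \<le> card ((\<lambda>i. i div 2) ` S)"
      using less.IH[of "n div 2"] tm_weak_attractor_half[OF less.prems(2)] less.prems(3) False by simp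
    also have "\<dots> \<le> card S"
      using card_image_le less.prems(3) by blast
    finally show ?thesis .
  qed
qed

definition base_edge_attractor :: "nat \<Rightarrow> nat list" where
  "base_edge_attractor n =
    (if n \<le> 12 then [3, 7, 8, 9] else if n \<le> 19 then [3, 7, 9, 11] else [3, 7, 11, 17])"

definition base_edge_attractor_certified :: "nat \<Rightarrow> bool" where
  "base_edge_attractor_certified n \<longleftrightarrow> (let A = base_edge_attractor n in
     distinct A \<and> length A = 4 \<and>
     edge_attractor_check (map tm [0..<n]) A \<and> edge_attractor_check (map tm [0..<Suc n]) A)"

lemma base_edge_attractors_certified: "list_all base_edge_attractor_certified [12..<24]"
  by code_simp

lemma tm_edge_attractor_card_4:
  assumes "12 \<le> n"
  shows "\<exists>S. card S = 4 \<and> tm_edge_attractor S n \<and> tm_edge_attractor S (Suc n)"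
  using assms
proof (induction n rule: less_induct)
  case (less n)
  show ?case
  proof (cases "n < 24")
    case True
    then have "base_edge_attractor_certified n"
      using list_all_uptD[OF base_edge_attractors_certified] less.prems by simp
    then show ?thesis
      unfolding base_edge_attractor_certified_def Let_def
      using edge_attractor_check_sound distinct_card by metis
  next
    case False
    define k e where "k = n div 2" "e = n mod 2"
    then have n: "n = 2 * k + e" "e \<le> 1" "12 \<le> k" "k < n"
      using False by auto
    then obtain S where S: "card S = 4" "tm_edge_attractor S k" "tm_edge_attractor S (Suc k)"
      using less.IH by blast
    let ?S' = "(\<lambda>i. 2 * i + 1) ` S"
    have "card ?S' = 4"
      using S(1) by (simp add: card_image inj_on_def)
    moreover have "tm_edge_attractor ?S' n"
      using tm_edge_attractor_double[OF S(2), of e] S(2,3) n by (cases e) auto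
    moreover have "tm_edge_attractor ?S' (Suc n)"
    proof (cases e)
      case 0
      then show ?thesis
        using tm_edge_attractor_double[OF S(2), of 1] S(3) n by simp
    next
      case (Suc e')
      then show ?thesis
        using tm_edge_attractor_double[of S "Suc k" 0] S(3) n Suc by simp
    qed
    ultimately show ?thesis
      by blast
  qed
qed

lemma min_attractor_size_tm_prefix_large:
  assumes "25 \<le> n"
  shows "min_attractor_size (tm_prefix n) = 4"
proof -
  obtain S where S: "card S = 4" "tm_edge_attractor S n"
    using tm_edge_attractor_card_4[of n] assms by auto
  show ?thesis
  proof (rule min_attractor_size_eqI)
    show "string_attractor (tm_prefix n) S"
      using tm_edge_attractor_imp_string_attractor S(2) assms by simp
    show "card S = 4"
      by (rule S(1))
    fix S' assume "string_attractor (tm_prefix n) S'"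
    then show "4 \<le> card S'"
      using tm_weak_attractor_card_ge_4 string_attractor_imp_tm_weak_attractor
        string_attractor_finite assms by blast
  qed
qed

theorem theorem5:
  fixes n :: nat
  assumes "n \<ge> 1"
  shows "min_attractor_size (tm_prefix n) =
    (if n = 1 then 1
     else if n \<le> 6 then 2
     else if (7 \<le> n \<and> n \<le> 14) \<or> (17 \<le> n \<and> n \<le> 24) then 3
     else 4)"
proof (cases "n \<le> 24")
  case True
  then show ?thesis
    using min_attractor_size_tm_prefix_small[OF assms] unfolding tm_attractor_size_def by simp
next
  case False
  then show ?thesis
    using min_attractor_size_tm_prefix_large by simp
qed

end
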